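(* Let $x\in\mathbb{R}$. Every real $y$ that is computable from $x$ can be expressed as a finite sum of reals each of which is Turing equivalent to $x$.
   Context: Turing reducibility between reals is the usual one (e.g. via binary/decimal expansions). *)

theory Defs
  imports Complex_Main
begin

datatype recf =
    Zero
  | Succ
  | Proj nat
  | Comp recf "recf list"
  | Prim recf recf
  | Mn recf
  | Oracle

inductive eval :: "nat set \<Rightarrow> recf \<Rightarrow> nat list \<Rightarrow> nat \<Rightarrow> bool" for A :: "nat set" where
  eval_Zero: "eval A Zero xs 0"
| eval_Succ: "eval A Succ (x # xs) (Suc x)"
| eval_Proj: "i < length xs \<Longrightarrow> eval A (Proj i) xs (xs ! i)"
| eval_Oracle: "eval A Oracle (x # xs) (if x \<in> A then 1 else 0)"
| eval_Comp: "length ys = length gs \<Longrightarrow> (\<forall>i < length gs. eval A (gs ! i) xs (ys ! i))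
      \<Longrightarrow> eval A f ys z \<Longrightarrow> eval A (Comp f gs) xs z"
| eval_Prim0: "eval A g xs y \<Longrightarrow> eval A (Prim g h) (0 # xs) y"
| eval_PrimS: "eval A (Prim g h) (n # xs) y \<Longrightarrow> eval A h (n # y # xs) z
      \<Longrightarrow> eval A (Prim g h) (Suc n # xs) z"
| eval_Mn: "eval A f (n # xs) 0 \<Longrightarrow> (\<forall>m < n. \<exists>y. eval A f (m # xs) (Suc y))
      \<Longrightarrow> eval A (Mn f) xs n"

definition turing_le_set :: "nat set \<Rightarrow> nat set \<Rightarrow> bool" where
  "turing_le_set A B \<longleftrightarrow> (\<exists>f. \<forall>n. eval B f [n] (if n \<in> A then 1 else 0))"

text \<open>For n \<ge> 1 this is the n-th binary digit of the fractional part of x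
  (standard expansion, not ending in 1s); n = 0 records the parity of floor x.
  The integer part is finite information and does not affect the degree.\<close>

definition real_bits :: "real \<Rightarrow> nat set" where
  "real_bits x = {n. odd \<lfloor>2 ^ n * x\<rfloor>}"

definition turing_le_real :: "real \<Rightarrow> real \<Rightarrow> bool" where
  "turing_le_real y x \<longleftrightarrow> turing_le_set (real_bits y) (real_bits x)"

definition turing_equiv_real :: "real \<Rightarrow> real \<Rightarrow> bool" where
  "turing_equiv_real y x \<longleftrightarrow> turing_le_real y x \<and> turing_le_real x y"

end

theory Submission
  imports Defs "HOL-Library.Infinite_Set"
begin

(*
  Let A and B be the binary digit sets of x and y; B is decidable relative to A.
  As 1 = 0.111... in binary, y + 1 = floor y + 0.B + 0.111..., and these digits can
  be redistributed over three binary fractions: the even-position digits of B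
  together with a set V of odd positions, the odd-position digits of B together with
  a set W of even positions, and the complement of V and W.  If V and W encode A so
  that A can be read off from each of the three digit sets, and each of them is
  co-infinite (so that it really is the digit set of its summand), then every
  summand is computable from x and computes x.
*)

section \<open>Oracle computability\<close>

primrec const_code :: "nat \<Rightarrow> recf" where
  "const_code 0 = Zero"
| "const_code (Suc k) = Comp Succ [const_code k]"

definition add_code :: recf where
  "add_code = Prim (Proj 0) (Comp Succ [Proj 1])"

definition mult_code :: recf where
  "mult_code = Prim Zero (Comp add_code [Proj 1, Proj 2])"

lemma eval_Proj_0: "eval A (Proj 0) (x # xs) x"
  and eval_Proj_1: "eval A (Proj 1) (x # y # xs) y"
  and eval_Proj_2: "eval A (Proj 2) (x # y # z # xs) z"
  using eval_Proj[of 0 "x # xs" A] eval_Proj[of 1 "x # y # xs" A] eval_Proj[of 2 "x # y # z # xs" A]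
  by (simp_all add: numeral_2_eq_2)

lemma eval_Comp_1:
  assumes "eval A g xs y" "eval A f [y] z"
  shows "eval A (Comp f [g]) xs z"
  by (rule eval_Comp[where ys="[y]"]) (use assms in auto)

lemma eval_Comp_2:
  assumes "eval A g1 xs y1" "eval A g2 xs y2" "eval A f [y1, y2] z"
  shows "eval A (Comp f [g1, g2]) xs z"
  by (rule eval_Comp[where ys="[y1, y2]"]) (use assms in \<open>auto simp: less_Suc_eq\<close>)

lemma eval_const_code: "eval A (const_code k) xs k"
  by (induction k) (auto intro: eval_Zero eval_Comp_1 eval_Succ)

lemma eval_add_code: "eval A add_code [n, m] (n + m)"
proof (induction n)
  case 0
  show ?case unfolding add_code_def using eval_Prim0[OF eval_Proj_0] by simp
next
  case (Suc n)
  have "eval A (Comp Succ [Proj 1]) [n, n + m, m] (Suc (n + m))"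
    by (intro eval_Comp_1[OF eval_Proj_1] eval_Succ)
  with Suc show ?case unfolding add_code_def by (simp add: eval_PrimS)
qed

lemma eval_mult_code: "eval A mult_code [n, m] (n * m)"
proof (induction n)
  case 0
  show ?case unfolding mult_code_def by (simp add: eval_Prim0 eval_Zero)
next
  case (Suc n)
  have "eval A (Comp add_code [Proj 1, Proj 2]) [n, n * m, m] (n * m + m)"
    by (intro eval_Comp_2[OF eval_Proj_1 eval_Proj_2] eval_add_code)
  with Suc show ?case unfolding mult_code_def by (simp add: eval_PrimS add.commute)
qed

definition oracle_computable :: "nat set \<Rightarrow> (nat \<Rightarrow> nat) \<Rightarrow> bool" where
  "oracle_computable A f \<longleftrightarrow> (\<exists>c. \<forall>n. eval A c [n] (f n))"

definition oracle_computable2 :: "nat set \<Rightarrow> (nat \<Rightarrow> nat \<Rightarrow> nat) \<Rightarrow> bool" where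
  "oracle_computable2 A f \<longleftrightarrow> (\<exists>c. \<forall>n m. eval A c [n, m] (f n m))"

definition oracle_decidable :: "nat set \<Rightarrow> (nat \<Rightarrow> bool) \<Rightarrow> bool" where
  "oracle_decidable A P \<longleftrightarrow> oracle_computable A (\<lambda>n. of_bool (P n))"

lemma turing_le_set_iff_oracle_decidable:
  "turing_le_set S A \<longleftrightarrow> oracle_decidable A (\<lambda>n. n \<in> S)"
  unfolding turing_le_set_def oracle_decidable_def oracle_computable_def of_bool_def ..

lemma oracle_computable_const: "oracle_computable A (\<lambda>_. k)"
  unfolding oracle_computable_def using eval_const_code by blast

lemma oracle_computable_id: "oracle_computable A (\<lambda>n. n)"
  unfolding oracle_computable_def using eval_Proj_0 by blast

lemma oracle_computable_compose:
  "oracle_computable A f \<Longrightarrow> oracle_computable A g \<Longrightarrow> oracle_computable A (\<lambda>n. f (g n))"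
  unfolding oracle_computable_def using eval_Comp_1 by blast

lemma oracle_computable_compose2:
  "oracle_computable2 A h \<Longrightarrow> oracle_computable A f \<Longrightarrow> oracle_computable A g
    \<Longrightarrow> oracle_computable A (\<lambda>n. h (f n) (g n))"
  unfolding oracle_computable_def oracle_computable2_def using eval_Comp_2 by blast

lemma oracle_computable2_add: "oracle_computable2 A (+)"
  unfolding oracle_computable2_def using eval_add_code by blast

lemma oracle_computable2_mult: "oracle_computable2 A (*)"
  unfolding oracle_computable2_def using eval_mult_code by blast

lemma oracle_computable2_fst: "oracle_computable A f \<Longrightarrow> oracle_computable2 A (\<lambda>n m. f n)"
  unfolding oracle_computable_def oracle_computable2_def using eval_Comp_1[OF eval_Proj_0] by blast

lemma oracle_computable2_snd: "oracle_computable A f \<Longrightarrow> oracle_computable2 A (\<lambda>n m. f m)"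
  unfolding oracle_computable_def oracle_computable2_def using eval_Comp_1[OF eval_Proj_1] by blast

lemma oracle_computable2_compose2:
  assumes "oracle_computable2 A h" "oracle_computable2 A f" "oracle_computable2 A g"
  shows "oracle_computable2 A (\<lambda>n m. h (f n m) (g n m))"
proof -
  from assms obtain ch cf cg where "\<And>n m. eval A ch [n, m] (h n m)"
    "\<And>n m. eval A cf [n, m] (f n m)" "\<And>n m. eval A cg [n, m] (g n m)"
    unfolding oracle_computable2_def by blast
  then have "\<And>n m. eval A (Comp ch [cf, cg]) [n, m] (h (f n m) (g n m))"
    by (blast intro: eval_Comp_2)
  then show ?thesis unfolding oracle_computable2_def by blast
qed

lemma oracle_computable_primrec:
  assumes "oracle_computable2 A h" "f 0 = a" "\<And>n. f (Suc n) = h n (f n)"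
  shows "oracle_computable A f"
proof -
  obtain c where c: "\<And>n m. eval A c [n, m] (h n m)"
    using assms(1) unfolding oracle_computable2_def by blast
  have "eval A (Prim (const_code a) (Comp c [Proj 0, Proj 1])) [n] (f n)" for n
  proof (induction n)
    case 0
    show ?case using assms(2) by (simp add: eval_Prim0 eval_const_code)
  next
    case (Suc n)
    have "eval A (Comp c [Proj 0, Proj 1]) [n, f n] (f (Suc n))"
      unfolding assms(3) by (intro eval_Comp_2[OF eval_Proj_0 eval_Proj_1] c)
    with Suc show ?case by (simp add: eval_PrimS)
  qed
  then show ?thesis unfolding oracle_computable_def by blast
qed

lemma oracle_decidable_cong:
  assumes "oracle_decidable A P" "\<And>n. P n \<longleftrightarrow> Q n"
  shows "oracle_decidable A Q"
proof -
  have "P = Q" using assms(2) by blast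
  with assms(1) show ?thesis by simp
qed

lemma oracle_decidable_const: "oracle_decidable A (\<lambda>_. b)"
  unfolding oracle_decidable_def by (rule oracle_computable_const)

lemma oracle_decidable_oracle: "oracle_decidable A (\<lambda>n. n \<in> A)"
  unfolding oracle_decidable_def oracle_computable_def of_bool_def
  using eval_Oracle[where xs="[]" and A=A] by blast

lemma oracle_decidable_compose:
  "oracle_decidable A P \<Longrightarrow> oracle_computable A g \<Longrightarrow> oracle_decidable A (\<lambda>n. P (g n))"
  unfolding oracle_decidable_def by (rule oracle_computable_compose)

lemma oracle_decidable_zero: "oracle_decidable A (\<lambda>n. n = 0)"
  unfolding oracle_decidable_def
  by (rule oracle_computable_primrec[where h="\<lambda>_ _. 0"])
    (simp_all add: oracle_computable2_fst oracle_computable_const)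

lemma oracle_decidable_not: "oracle_decidable A P \<Longrightarrow> oracle_decidable A (\<lambda>n. \<not> P n)"
  using oracle_decidable_compose[OF oracle_decidable_zero, of A "\<lambda>n. of_bool (P n)"]
  unfolding oracle_decidable_def by simp

lemma oracle_decidable_conj:
  "oracle_decidable A P \<Longrightarrow> oracle_decidable A Q \<Longrightarrow> oracle_decidable A (\<lambda>n. P n \<and> Q n)"
  unfolding oracle_decidable_def
  using oracle_computable_compose2[OF oracle_computable2_mult, of A "\<lambda>n. of_bool (P n)"]
  by (simp add: of_bool_conj)

lemma oracle_decidable_disj:
  "oracle_decidable A P \<Longrightarrow> oracle_decidable A Q \<Longrightarrow> oracle_decidable A (\<lambda>n. P n \<or> Q n)"
  using oracle_decidable_not[OF oracle_decidable_conj[OF oracle_decidable_not oracle_decidable_not]]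
  by simp

lemma oracle_decidable_even: "oracle_decidable A even"
  unfolding oracle_decidable_def
  by (rule oracle_computable_primrec[where h="\<lambda>_ y. of_bool (y = 0)"])
    (simp_all add: oracle_computable2_snd oracle_decidable_zero[unfolded oracle_decidable_def])

lemma oracle_computable_half: "oracle_computable A (\<lambda>n. n div 2)"
  by (rule oracle_computable_primrec[where h="\<lambda>n y. y + of_bool (odd n)"])
    (auto intro!: oracle_computable2_compose2[OF oracle_computable2_add] oracle_computable2_fst
      oracle_computable2_snd oracle_computable_id
      oracle_decidable_not[OF oracle_decidable_even, unfolded oracle_decidable_def])

lemma oracle_computable_quarter: "oracle_computable A (\<lambda>n. n div 4)"
proof -
  have "n div 2 div 2 = n div 4" for n :: nat
    by (simp add: div_mult2_eq[symmetric])
  then show ?thesis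
    using oracle_computable_compose[OF oracle_computable_half oracle_computable_half] by simp
qed

lemma oracle_computable_affine: "oracle_computable A (\<lambda>n. a * n + b)"
  by (intro oracle_computable_compose2[OF oracle_computable2_add]
      oracle_computable_compose2[OF oracle_computable2_mult]
      oracle_computable_const oracle_computable_id)

section \<open>Binary fractions\<close>

text \<open>Position 0 is ignored, as in \<^const>\<open>real_bits\<close>, where it holds the parity of the
  integer part.\<close>

definition binary_term :: "nat set \<Rightarrow> nat \<Rightarrow> real" where
  "binary_term S k = (if Suc k \<in> S then 1 / 2 ^ Suc k else 0)"

definition binary_fraction :: "nat set \<Rightarrow> real" where
  "binary_fraction S = (\<Sum>k. binary_term S k)"

primrec binary_prefix :: "nat set \<Rightarrow> nat \<Rightarrow> int" where
  "binary_prefix S 0 = 0"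
| "binary_prefix S (Suc n) = 2 * binary_prefix S n + of_bool (Suc n \<in> S)"

lemma binary_term_nonneg: "0 \<le> binary_term S k"
  by (simp add: binary_term_def)

lemma summable_binary_term: "summable (binary_term S)"
proof (rule summable_comparison_test'[where N=0])
  show "summable (\<lambda>k. (1/2::real) ^ Suc k)"
    using summable_Suc_iff summable_geometric[of "1/2::real"] by simp
qed (simp add: binary_term_def power_divide)

lemma binary_fraction_nonneg: "0 \<le> binary_fraction S"
  unfolding binary_fraction_def by (intro suminf_nonneg summable_binary_term binary_term_nonneg)

lemma binary_fraction_eq_one:
  assumes "\<And>k. 0 < k \<Longrightarrow> k \<in> S"
  shows "binary_fraction S = 1"
proof -
  have "binary_term S = (\<lambda>k. (1/2) * (1/2) ^ k)"
    using assms by (auto simp: binary_term_def power_divide)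
  moreover have "(\<lambda>k. (1/2) * (1/2::real) ^ k) sums ((1/2) * 2)"
    by (intro sums_mult) (use geometric_sums[of "1/2::real"] in simp)
  ultimately show ?thesis
    unfolding binary_fraction_def by (simp add: sums_iff)
qed

lemma binary_fraction_Un_disjoint:
  assumes "S \<inter> T = {}"
  shows "binary_fraction (S \<union> T) = binary_fraction S + binary_fraction T"
proof -
  have "binary_term (S \<union> T) = (\<lambda>k. binary_term S k + binary_term T k)"
    using assms by (auto simp: binary_term_def fun_eq_iff)
  then show ?thesis
    unfolding binary_fraction_def by (simp add: suminf_add summable_binary_term)
qed

lemma binary_fraction_add_Compl: "binary_fraction S + binary_fraction (- S) = 1"
  by (simp add: binary_fraction_Un_disjoint[symmetric] binary_fraction_eq_one)

lemma binary_fraction_less_one: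
  assumes "0 < j" "j \<notin> S"
  shows "binary_fraction S < 1"
proof -
  note binary_fraction_add_Compl[of S]
  moreover have "0 < binary_fraction (- S)"
    unfolding binary_fraction_def
  proof (rule suminf_pos2)
    show "0 < binary_term (- S) (j - 1)"
      using assms by (simp add: binary_term_def)
  qed (simp_all add: summable_binary_term binary_term_nonneg)
  ultimately show ?thesis by linarith
qed

lemma binary_prefix_eq_sum:
  "of_int (binary_prefix S n) = 2 ^ n * (\<Sum>k<n. binary_term S k)"
  by (induction n) (simp_all add: binary_term_def algebra_simps)

lemma binary_fraction_scale:
  "2 ^ n * (of_int m + binary_fraction S)
    = of_int (2 ^ n * m + binary_prefix S n) + binary_fraction {k. n + k \<in> S}"
proof -
  have shift: "binary_term S (k + n) = binary_term {k. n + k \<in> S} k / 2 ^ n" for k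
    by (simp add: binary_term_def add.commute power_add)
  have "binary_fraction S = (\<Sum>k. binary_term S (k + n)) + (\<Sum>k<n. binary_term S k)"
    unfolding binary_fraction_def by (rule suminf_split_initial_segment[OF summable_binary_term])
  also have "(\<Sum>k. binary_term S (k + n)) = binary_fraction {k. n + k \<in> S} / 2 ^ n"
    unfolding shift binary_fraction_def by (rule suminf_divide[OF summable_binary_term])
  finally show ?thesis
    by (simp add: binary_prefix_eq_sum algebra_simps)
qed

lemma floor_scale_binary_fraction:
  assumes "n < j" "j \<notin> S"
  shows "\<lfloor>2 ^ n * (of_int m + binary_fraction S)\<rfloor> = 2 ^ n * m + binary_prefix S n"
proof -
  have "binary_fraction {k. n + k \<in> S} < 1"
    by (rule binary_fraction_less_one[of "j - n"]) (use assms in auto)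
  then show ?thesis
    unfolding binary_fraction_scale using binary_fraction_nonneg
    by (intro floor_unique) simp_all
qed

lemma real_bits_binary_fraction:
  assumes "infinite (- S)"
  shows "real_bits (of_int m + binary_fraction S) = {n. n = 0 \<and> odd m \<or> 0 < n \<and> n \<in> S}"
proof -
  have "odd \<lfloor>2 ^ n * (of_int m + binary_fraction S)\<rfloor> \<longleftrightarrow> n = 0 \<and> odd m \<or> 0 < n \<and> n \<in> S" for n
  proof -
    obtain j where "n < j" "j \<notin> S"
      using assms by (auto simp: infinite_nat_iff_unbounded)
    then have "\<lfloor>2 ^ n * (of_int m + binary_fraction S)\<rfloor> = 2 ^ n * m + binary_prefix S n"
      by (rule floor_scale_binary_fraction)
    then show ?thesis
      by (cases n) simp_all
  qed
  then show ?thesis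
    unfolding real_bits_def by blast
qed

lemma floor_double: "\<lfloor>2 * u\<rfloor> = 2 * \<lfloor>u\<rfloor> + of_bool (odd \<lfloor>2 * u\<rfloor>)"
  for u :: real
proof -
  have "2 * \<lfloor>u\<rfloor> \<le> \<lfloor>2 * u\<rfloor>" "\<lfloor>2 * u\<rfloor> \<le> 2 * \<lfloor>u\<rfloor> + 1"
    by linarith+
  then show ?thesis unfolding of_bool_def by presburger
qed

lemma floor_pow2_real_bits:
  "\<lfloor>2 ^ n * t\<rfloor> = 2 ^ n * \<lfloor>t\<rfloor> + binary_prefix (real_bits t) n"
proof (induction n)
  case (Suc n)
  have "\<lfloor>2 ^ Suc n * t\<rfloor> = 2 * \<lfloor>2 ^ n * t\<rfloor> + of_bool (Suc n \<in> real_bits t)"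
    using floor_double[of "2 ^ n * t"] by (simp add: real_bits_def mult.assoc)
  with Suc show ?case by simp
qed simp

lemma LIMSEQ_floor_pow2_divide: "(\<lambda>n. \<lfloor>2 ^ n * t\<rfloor> / 2 ^ n) \<longlonglongrightarrow> t"
proof (rule tendsto_sandwich)
  have "(2 ^ n * t - 1) / 2 ^ n \<le> \<lfloor>2 ^ n * t\<rfloor> / 2 ^ n" for n
    by (intro divide_right_mono) (linarith, simp)
  then show "\<forall>\<^sub>F n in sequentially. t - (1/2) ^ n \<le> \<lfloor>2 ^ n * t\<rfloor> / 2 ^ n"
    by (intro always_eventually allI) (simp add: diff_divide_distrib power_divide)
  show "\<forall>\<^sub>F n in sequentially. \<lfloor>2 ^ n * t\<rfloor> / 2 ^ n \<le> t"
    by (intro always_eventually allI) (simp add: field_simps)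
  show "(\<lambda>n. t - (1/2) ^ n) \<longlonglongrightarrow> t"
    using tendsto_diff[OF tendsto_const LIMSEQ_power_zero[of "1/2::real"]] by simp
qed simp

lemma floor_add_binary_fraction_real_bits:
  "of_int \<lfloor>t\<rfloor> + binary_fraction (real_bits t) = t"
proof -
  have "(\<Sum>k<n. binary_term (real_bits t) k) = \<lfloor>2 ^ n * t\<rfloor> / 2 ^ n - \<lfloor>t\<rfloor>" for n
    using binary_prefix_eq_sum[of "real_bits t" n] floor_pow2_real_bits[of n t]
    by (simp add: field_simps)
  then have "binary_term (real_bits t) sums (t - \<lfloor>t\<rfloor>)"
    unfolding sums_def by (simp add: LIMSEQ_floor_pow2_divide tendsto_diff)
  then show ?thesis
    unfolding binary_fraction_def by (simp add: sums_iff)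
qed

lemma real_bits_coinfinite: "infinite (- real_bits t)"
proof
  assume "finite (- real_bits t)"
  then obtain N where "\<forall>j \<in> - real_bits t. j < N"
    by (auto simp: finite_nat_set_iff_bounded)
  then have N: "\<And>j. N < j \<Longrightarrow> j \<in> real_bits t"
    using not_less_iff_gr_or_eq by blast
  have "2 ^ N * t = of_int (2 ^ N * \<lfloor>t\<rfloor> + binary_prefix (real_bits t) N)
      + binary_fraction {k. N + k \<in> real_bits t}"
    using binary_fraction_scale[of N "\<lfloor>t\<rfloor>" "real_bits t"]
    by (simp add: floor_add_binary_fraction_real_bits)
  also have "\<dots> = of_int \<lfloor>2 ^ N * t\<rfloor> + 1"
    using N by (simp add: binary_fraction_eq_one floor_pow2_real_bits)
  finally show False by linarith
qed

section \<open>Splitting a real into Turing equivalent summands\<close>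

text \<open>\<open>A\<close> is written at the positions \<open>4n + 1\<close> of \<open>odd_code A\<close> and \<open>4n + 2\<close> of
  \<open>even_code A\<close>.  The positions \<open>4n + 3\<close>, all in \<open>odd_code A\<close>, and \<open>4n\<close>, all outside
  \<open>even_code A\<close>, keep the three digit sets of the decomposition co-infinite.\<close>

definition odd_code :: "nat set \<Rightarrow> nat set" where
  "odd_code A = {k. odd k \<and> (odd (k div 2) \<or> k div 4 \<in> A)}"

definition even_code :: "nat set \<Rightarrow> nat set" where
  "even_code A = {k. even k \<and> odd (k div 2) \<and> k div 4 \<in> A}"

lemma odd_code_subset: "odd_code A \<subseteq> {k. odd k}"
  by (auto simp: odd_code_def)

lemma even_code_subset: "even_code A \<subseteq> {k. even k}"
  by (auto simp: even_code_def)

lemma mem_odd_code_4_1: "4 * n + 1 \<in> odd_code A \<longleftrightarrow> n \<in> A"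
proof -
  have "(4 * n + 1) div 2 = 2 * n" "(4 * n + 1) div 4 = n"
    by presburger+
  then show ?thesis by (simp add: odd_code_def)
qed

lemma mem_odd_code_4_3: "4 * n + 3 \<in> odd_code A"
proof -
  have "(4 * n + 3) div 2 = 2 * n + 1"
    by presburger
  then show ?thesis by (simp add: odd_code_def)
qed

lemma mem_even_code_4_2: "4 * n + 2 \<in> even_code A \<longleftrightarrow> n \<in> A"
proof -
  have "(4 * n + 2) div 2 = 2 * n + 1" "(4 * n + 2) div 4 = n"
    by presburger+
  then show ?thesis by (simp add: even_code_def)
qed

lemma not_mem_even_code_4: "4 * n \<notin> even_code A"
  by (simp add: even_code_def)

lemma oracle_decidable_odd_code:
  assumes "oracle_decidable C (\<lambda>n. n \<in> A)"
  shows "oracle_decidable C (\<lambda>k. k \<in> odd_code A)"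
proof -
  have "oracle_decidable C (\<lambda>k. even (k div 2))"
    by (rule oracle_decidable_compose[OF oracle_decidable_even oracle_computable_half])
  moreover have "oracle_decidable C (\<lambda>k. k div 4 \<in> A)"
    by (rule oracle_decidable_compose[OF assms oracle_computable_quarter])
  ultimately show ?thesis
    unfolding odd_code_def mem_Collect_eq
    by (intro oracle_decidable_conj oracle_decidable_disj oracle_decidable_not oracle_decidable_even)
qed

lemma oracle_decidable_even_code:
  assumes "oracle_decidable C (\<lambda>n. n \<in> A)"
  shows "oracle_decidable C (\<lambda>k. k \<in> even_code A)"
proof -
  have "oracle_decidable C (\<lambda>k. even (k div 2))"
    by (rule oracle_decidable_compose[OF oracle_decidable_even oracle_computable_half])
  moreover have "oracle_decidable C (\<lambda>k. k div 4 \<in> A)"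
    by (rule oracle_decidable_compose[OF assms oracle_computable_quarter])
  ultimately show ?thesis
    unfolding even_code_def mem_Collect_eq
    by (intro oracle_decidable_conj oracle_decidable_not oracle_decidable_even)
qed

lemma binary_fraction_interleave:
  assumes "V \<subseteq> {k. odd k}" "W \<subseteq> {k. even k}"
  shows "binary_fraction ({k \<in> B. even k} \<union> V) + binary_fraction ({k \<in> B. odd k} \<union> W)
    + binary_fraction (- (V \<union> W)) = binary_fraction B + 1"
proof -
  have "binary_fraction B = binary_fraction {k \<in> B. even k} + binary_fraction {k \<in> B. odd k}"
    by (subst binary_fraction_Un_disjoint[symmetric]) (auto intro: arg_cong[of _ _ binary_fraction])
  moreover have "binary_fraction (V \<union> W) = binary_fraction V + binary_fraction W"
    using assms by (intro binary_fraction_Un_disjoint) auto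
  moreover note binary_fraction_add_Compl[of "V \<union> W"]
  moreover have "binary_fraction ({k \<in> B. even k} \<union> V) = binary_fraction {k \<in> B. even k} + binary_fraction V"
    using assms(1) by (intro binary_fraction_Un_disjoint) auto
  moreover have "binary_fraction ({k \<in> B. odd k} \<union> W) = binary_fraction {k \<in> B. odd k} + binary_fraction W"
    using assms(2) by (intro binary_fraction_Un_disjoint) auto
  ultimately show ?thesis by linarith
qed

lemma oracle_decidable_pos: "oracle_decidable C (\<lambda>n. 0 < n)"
  by (rule oracle_decidable_cong[OF oracle_decidable_not[OF oracle_decidable_zero]]) simp

text \<open>The last assumption asks for a reduction of \<open>real_bits x\<close> to \<open>S\<close> that works uniformly
  for every oracle deciding \<open>S\<close>; this avoids having to substitute one oracle machine
  into another.\<close>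

lemma turing_equiv_real_binary_fraction:
  assumes "infinite (- S)"
    and "oracle_decidable (real_bits x) (\<lambda>n. n \<in> S)"
    and "\<And>C. oracle_decidable C (\<lambda>n. 0 < n \<and> n \<in> S) \<Longrightarrow> oracle_decidable C (\<lambda>n. n \<in> real_bits x)"
  shows "turing_equiv_real (of_int m + binary_fraction S) x"
proof -
  let ?z = "of_int m + binary_fraction S"
  have bits: "real_bits ?z = {n. n = 0 \<and> odd m \<or> 0 < n \<and> n \<in> S}"
    by (rule real_bits_binary_fraction[OF assms(1)])
  have "oracle_decidable (real_bits x) (\<lambda>n. n \<in> real_bits ?z)"
    unfolding bits mem_Collect_eq
    by (intro oracle_decidable_disj oracle_decidable_conj oracle_decidable_zero
        oracle_decidable_const oracle_decidable_pos assms(2))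
  moreover have "oracle_decidable (real_bits ?z) (\<lambda>n. n \<in> real_bits x)"
  proof (rule assms(3))
    show "oracle_decidable (real_bits ?z) (\<lambda>n. 0 < n \<and> n \<in> S)"
      by (rule oracle_decidable_cong[OF oracle_decidable_conj[OF oracle_decidable_pos oracle_decidable_oracle]])
        (auto simp: bits)
  qed
  ultimately show ?thesis
    by (simp add: turing_equiv_real_def turing_le_real_def turing_le_set_iff_oracle_decidable)
qed

lemma turing_equiv_real_odd_code:
  assumes "oracle_decidable (real_bits x) (\<lambda>n. n \<in> B)"
  shows "turing_equiv_real (of_int m + binary_fraction ({k \<in> B. even k} \<union> odd_code (real_bits x))) x"
    (is "turing_equiv_real (_ + binary_fraction ?S) x")
proof (rule turing_equiv_real_binary_fraction)
  have "(\<lambda>n. 4 * n + 1) ` (- real_bits x) \<subseteq> - ?S"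
    using mem_odd_code_4_1 by auto
  moreover have "infinite ((\<lambda>n::nat. 4 * n + 1) ` (- real_bits x))"
    using real_bits_coinfinite[of x] by (simp add: finite_image_iff inj_on_def)
  ultimately show "infinite (- ?S)"
    by (rule infinite_super)
  show "oracle_decidable (real_bits x) (\<lambda>n. n \<in> ?S)"
    unfolding Un_iff mem_Collect_eq
    by (intro oracle_decidable_disj oracle_decidable_conj oracle_decidable_even assms
        oracle_decidable_odd_code oracle_decidable_oracle)
next
  fix C
  assume "oracle_decidable C (\<lambda>n. 0 < n \<and> n \<in> ?S)"
  from oracle_decidable_compose[OF this oracle_computable_affine[of C 4 1]]
  show "oracle_decidable C (\<lambda>n. n \<in> real_bits x)"
    by (rule oracle_decidable_cong) (use mem_odd_code_4_1 in simp)
qed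

lemma turing_equiv_real_even_code:
  assumes "oracle_decidable (real_bits x) (\<lambda>n. n \<in> B)"
  shows "turing_equiv_real (of_int m + binary_fraction ({k \<in> B. odd k} \<union> even_code (real_bits x))) x"
    (is "turing_equiv_real (_ + binary_fraction ?S) x")
proof (rule turing_equiv_real_binary_fraction)
  have "range (\<lambda>n. 4 * n) \<subseteq> - ?S"
    by (auto simp: not_mem_even_code_4)
  then show "infinite (- ?S)"
    by (rule infinite_super) (simp add: range_inj_infinite inj_on_def)
  show "oracle_decidable (real_bits x) (\<lambda>n. n \<in> ?S)"
    unfolding Un_iff mem_Collect_eq
    by (intro oracle_decidable_disj oracle_decidable_conj oracle_decidable_not oracle_decidable_even
        assms oracle_decidable_even_code oracle_decidable_oracle)
next
  fix C
  assume "oracle_decidable C (\<lambda>n. 0 < n \<and> n \<in> ?S)"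
  from oracle_decidable_compose[OF this oracle_computable_affine[of C 4 2]]
  show "oracle_decidable C (\<lambda>n. n \<in> real_bits x)"
    by (rule oracle_decidable_cong) (use mem_even_code_4_2 in simp)
qed

lemma turing_equiv_real_compl_code:
  "turing_equiv_real (of_int m + binary_fraction (- (odd_code (real_bits x) \<union> even_code (real_bits x)))) x"
    (is "turing_equiv_real (_ + binary_fraction ?S) x")
proof (rule turing_equiv_real_binary_fraction)
  have "range (\<lambda>n. 4 * n + 3) \<subseteq> - ?S"
    using mem_odd_code_4_3 by auto
  then show "infinite (- ?S)"
    by (rule infinite_super) (simp add: range_inj_infinite inj_on_def)
  show "oracle_decidable (real_bits x) (\<lambda>n. n \<in> ?S)"
    unfolding Compl_iff Un_iff
    by (intro oracle_decidable_not oracle_decidable_disj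
        oracle_decidable_odd_code oracle_decidable_even_code oracle_decidable_oracle)
next
  fix C
  assume "oracle_decidable C (\<lambda>n. 0 < n \<and> n \<in> ?S)"
  from oracle_decidable_not[OF oracle_decidable_compose[OF this oracle_computable_affine[of C 4 1]]]
  show "oracle_decidable C (\<lambda>n. n \<in> real_bits x)"
    by (rule oracle_decidable_cong) (use mem_odd_code_4_1 in \<open>simp add: even_code_def\<close>)
qed

theorem mainTheorem3:
  fixes x y :: real
  assumes "turing_le_real y x"
  shows "\<exists>zs :: real list. zs \<noteq> [] \<and> (\<forall>z \<in> set zs. turing_equiv_real z x) \<and> y = sum_list zs"
proof -
  let ?A = "real_bits x" and ?B = "real_bits y"
  define S1 where "S1 = {k \<in> ?B. even k} \<union> odd_code ?A"
  define S2 where "S2 = {k \<in> ?B. odd k} \<union> even_code ?A"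
  define S3 where "S3 = - (odd_code ?A \<union> even_code ?A)"
  define zs where "zs = [of_int (\<lfloor>y\<rfloor> - 1) + binary_fraction S1, binary_fraction S2, binary_fraction S3]"
  have B: "oracle_decidable ?A (\<lambda>n. n \<in> ?B)"
    using assms by (simp add: turing_le_real_def turing_le_set_iff_oracle_decidable)
  have "y = of_int \<lfloor>y\<rfloor> + binary_fraction ?B"
    by (simp add: floor_add_binary_fraction_real_bits)
  also have "\<dots> = sum_list zs"
    using binary_fraction_interleave[OF odd_code_subset even_code_subset, of ?B ?A ?A]
    unfolding zs_def S1_def S2_def S3_def by simp
  moreover have "turing_equiv_real (of_int (\<lfloor>y\<rfloor> - 1) + binary_fraction S1) x"
    unfolding S1_def by (rule turing_equiv_real_odd_code[OF B])
  moreover have "turing_equiv_real (binary_fraction S2) x"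
    using turing_equiv_real_even_code[OF B, of 0] unfolding S2_def by simp
  moreover have "turing_equiv_real (binary_fraction S3) x"
    using turing_equiv_real_compl_code[of 0 x] unfolding S3_def by simp
  ultimately show ?thesis
    by (intro exI[of _ zs]) (simp add: zs_def)
qed

end
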